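(* Let $C$ and $D$ be nonempty subsets of a Hilbert space $H$ with $D$ closed and convex, and let $P:H\to D$ be the metric projection onto $D$. Let $S$ be a right reversible semitopological semigroup and $\mathcal{S}=\{T_s:s\in S\}$ a representation of $S$ on $C$. Suppose that $x\in C$ is such that the map $s\mapsto T_sx$ is continuous from $S$ into $C$ (norm topology) and $\|T_{ts}x-z\|\le\|T_sx-z\|$ for all $z\in D$ and $s,t\in S$. Then the net $(P(T_sx))_{s\in S}$ converges in norm to some $z_0\in D$, where $S$ is ordered by: $a\le b$ iff $\overline{Sa}\cup\{a\}\supseteq\overline{Sb}\cup\{b\}$, and the limit is taken as $s$ increases in this order.
   Context: A semitopological semigroup is a semigroup with a Hausdorff topology in which $s\mapsto ts$ and $s\mapsto st$ are continuous for each $t$; it is right reversible if $\overline{Sa}\cap\overline{Sb}\neq\emptyset$ for all $a,b\in S$. A representation is a family $T_s:C\to C$ with $T_{st}=T_s\circ T_t$. The metric projection $P(y)$ is the unique point of $D$ nearest to $y$. *)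

theory Defs
  imports "HOL-Analysis.Analysis"
begin

text \<open>Metric projection onto D: the (unique, for D closed convex nonempty in a Hilbert space)
 point of D nearest to y.\<close>
definition metric_proj :: "'h::real_normed_vector set \<Rightarrow> 'h \<Rightarrow> 'h" where
  "metric_proj D y = (THE z. z \<in> D \<and> (\<forall>w\<in>D. norm (y - z) \<le> norm (y - w)))"

definition semitop_semigroup :: "('s::{semigroup_mult,t2_space}) itself \<Rightarrow> bool" where
  "semitop_semigroup _ \<longleftrightarrow>
     (\<forall>t::'s. continuous_on UNIV (\<lambda>s. t * s) \<and> continuous_on UNIV (\<lambda>s. s * t))"

definition right_reversible :: "('s::{semigroup_mult,topological_space}) itself \<Rightarrow> bool" where
  "right_reversible _ \<longleftrightarrow>
     (\<forall>a b::'s. closure (range (\<lambda>s. s * a)) \<inter> closure (range (\<lambda>s. s * b)) \<noteq> {})"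

definition sg_le :: "'s::{semigroup_mult,topological_space} \<Rightarrow> 's \<Rightarrow> bool" where
  "sg_le a b \<longleftrightarrow>
     closure (range (\<lambda>s. s * b)) \<union> {b} \<subseteq> closure (range (\<lambda>s. s * a)) \<union> {a}"

definition representation_on :: "('s::semigroup_mult \<Rightarrow> 'h \<Rightarrow> 'h) \<Rightarrow> 'h set \<Rightarrow> bool" where
  "representation_on T C \<longleftrightarrow>
     (\<forall>s. T s ` C \<subseteq> C) \<and> (\<forall>s t. \<forall>y\<in>C. T (s * t) y = T s (T t y))"

end

(*
  Write d(s) for the squared distance from T_s x to D.  Since s \<mapsto> norm (T_s x - z) is
  continuous and does not increase along the orbit S a, it is bounded by its value at a on
  the closure of S a as well; with z = P (T_a x) and the Pythagorean inequality for the metric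
  projection this gives norm (P (T_s x) - P (T_a x))^2 \<le> d(a) - d(s) for all s \<ge> a.
  Choosing a with d(a) close to inf d therefore makes P (T_s x) nearly constant beyond a, and
  right reversibility lets any two such tails meet, so the projections along a minimising
  sequence are Cauchy; their limit is the limit of the net.  The projection P itself exists
  by completeness, since the parallelogram law makes the sublevel sets in D of the distance
  to y a closed nest of vanishing diameter.
*)
theory Submission
  imports Defs
begin

lemma norm_diff_square_midpoint:
  fixes y u v :: "'a::real_inner"
  shows "(norm (u - v))\<^sup>2 = 2 * (norm (y - u))\<^sup>2 + 2 * (norm (y - v))\<^sup>2 - 4 * (norm (y - midpoint u v))\<^sup>2"
  by (simp add: midpoint_def power2_norm_eq_inner inner_commute algebra_simps)

lemma midpoint_in_convex:
  assumes "convex S" "u \<in> S" "v \<in> S"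
  shows "midpoint u v \<in> S"
  using assms closed_segment_subset midpoint_in_closed_segment by blast

lemma norm_diff_square_le_near_infimum:
  fixes y :: "'a::real_inner"
  assumes "convex S" "u \<in> S" "v \<in> S" "\<And>w. w \<in> S \<Longrightarrow> \<delta> \<le> (norm (y - w))\<^sup>2"
    and "(norm (y - u))\<^sup>2 \<le> \<delta> + h" "(norm (y - v))\<^sup>2 \<le> \<delta> + h"
  shows "(norm (u - v))\<^sup>2 \<le> 4 * h"
  using assms(4)[OF midpoint_in_convex[OF assms(1-3)]] assms(5,6) norm_diff_square_midpoint[of u v y]
  by linarith

lemma closest_point_exists_complete:
  fixes S :: "'a::{real_inner,complete_space} set"
  assumes "closed S" "convex S" "S \<noteq> {}"
  obtains p where "p \<in> S" "\<And>w. w \<in> S \<Longrightarrow> norm (y - p) \<le> norm (y - w)"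
proof -
  define \<delta> where "\<delta> = Inf ((\<lambda>w. (norm (y - w))\<^sup>2) ` S)"
  have bdd: "bdd_below ((\<lambda>w. (norm (y - w))\<^sup>2) ` S)"
    by (rule bdd_belowI[of _ 0]) auto
  have \<delta>_le: "\<delta> \<le> (norm (y - w))\<^sup>2" if "w \<in> S" for w
    unfolding \<delta>_def by (rule cINF_lower[OF bdd that])
  define K where "K n = S \<inter> {w. (norm (y - w))\<^sup>2 \<le> \<delta> + inverse (Suc n)}" for n :: nat
  have "closed (K n)" for n
    unfolding K_def using \<open>closed S\<close> by (intro closed_Int closed_Collect_le continuous_intros)
  moreover have "K n \<noteq> {}" for n
    using cInf_lessD[of "(\<lambda>w. (norm (y - w))\<^sup>2) ` S" "\<delta> + inverse (Suc n)"] \<open>S \<noteq> {}\<close>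
    unfolding K_def \<delta>_def by fastforce
  moreover have "K n \<subseteq> K m" if "m \<le> n" for m n
    using that unfolding K_def by (auto intro: order_trans le_imp_inverse_le)
  moreover have "\<exists>n. \<forall>u\<in>K n. \<forall>v\<in>K n. dist u v < \<epsilon>" if "\<epsilon> > 0" for \<epsilon>
  proof -
    obtain n where n: "inverse (real (Suc n)) < \<epsilon>\<^sup>2 / 4"
      using reals_Archimedean \<open>\<epsilon> > 0\<close> by (metis divide_pos_pos zero_less_numeral zero_less_power)
    have "dist u v < \<epsilon>" if "u \<in> K n" "v \<in> K n" for u v
    proof -
      have "(norm (u - v))\<^sup>2 \<le> 4 * inverse (Suc n)"
        using that \<delta>_le \<open>convex S\<close> by (intro norm_diff_square_le_near_infimum) (auto simp: K_def)
      also have "\<dots> < \<epsilon>\<^sup>2" using n by simp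
      finally show ?thesis
        using \<open>\<epsilon> > 0\<close> by (simp add: dist_norm power_less_imp_less_base)
    qed
    then show ?thesis by blast
  qed
  ultimately obtain p where p: "\<And>n. p \<in> K n"
    by (rule decreasing_closed_nest) blast+
  show thesis
  proof
    show "p \<in> S" using p[of 0] by (simp add: K_def)
    have "(norm (y - p))\<^sup>2 \<le> \<delta>"
    proof (rule field_le_epsilon)
      fix e :: real assume "e > 0"
      then obtain n where "inverse (real (Suc n)) < e" using reals_Archimedean by blast
      then show "(norm (y - p))\<^sup>2 \<le> \<delta> + e" using p[of n] by (simp add: K_def)
    qed
    then show "norm (y - p) \<le> norm (y - w)" if "w \<in> S" for w
      using \<delta>_le[OF that] by (simp add: power2_le_imp_le)
  qed
qed

lemma metric_proj_nearest:
  fixes D :: "'a::{real_inner,complete_space} set"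
  assumes "closed D" "convex D" "D \<noteq> {}"
  shows metric_proj_in: "metric_proj D y \<in> D"
    and metric_proj_le: "\<And>w. w \<in> D \<Longrightarrow> norm (y - metric_proj D y) \<le> norm (y - w)"
proof -
  have "\<exists>!p. p \<in> D \<and> (\<forall>w\<in>D. norm (y - p) \<le> norm (y - w))"
  proof (rule ex_ex1I)
    show "\<exists>p. p \<in> D \<and> (\<forall>w\<in>D. norm (y - p) \<le> norm (y - w))"
      using closest_point_exists_complete[OF assms] by metis
  next
    show "p = q" if "p \<in> D \<and> (\<forall>w\<in>D. norm (y - p) \<le> norm (y - w))"
      and "q \<in> D \<and> (\<forall>w\<in>D. norm (y - q) \<le> norm (y - w))" for p q
      using any_closest_point_unique[OF assms(2,1), of p q y] that by (simp add: dist_norm)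
  qed
  then have "metric_proj D y \<in> D \<and> (\<forall>w\<in>D. norm (y - metric_proj D y) \<le> norm (y - w))"
    unfolding metric_proj_def by (rule theI')
  then show "metric_proj D y \<in> D" "\<And>w. w \<in> D \<Longrightarrow> norm (y - metric_proj D y) \<le> norm (y - w)"
    by auto
qed

lemma metric_proj_pythagoras_le:
  fixes D :: "'a::{real_inner,complete_space} set"
  assumes "closed D" "convex D" "D \<noteq> {}" "w \<in> D"
  shows "(norm (y - metric_proj D y))\<^sup>2 + (norm (metric_proj D y - w))\<^sup>2 \<le> (norm (y - w))\<^sup>2"
proof -
  let ?p = "metric_proj D y"
  have "inner (y - ?p) (w - ?p) \<le> 0"
    using any_closest_point_dot[OF assms(2,1) metric_proj_in[OF assms(1-3)] assms(4)]
      metric_proj_le[OF assms(1-3)] by (simp add: dist_norm)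
  moreover have "(norm (y - w))\<^sup>2 = (norm (y - ?p))\<^sup>2 - 2 * inner (y - ?p) (w - ?p) + (norm (?p - w))\<^sup>2"
    by (simp add: power2_norm_eq_inner inner_commute algebra_simps)
  ultimately show ?thesis by linarith
qed

lemma small_oscillation_of_potential:
  fixes g :: "'a \<Rightarrow> 'b::real_normed_vector" and q :: "'a \<Rightarrow> real"
  assumes "bdd_below (range q)"
    and "\<And>a s. s \<in> U a \<Longrightarrow> (norm (g s - g a))\<^sup>2 + q s \<le> q a"
    and "\<epsilon> > 0"
  shows "\<exists>a. \<forall>s\<in>U a. dist (g s) (g a) < \<epsilon>"
proof -
  obtain a where a: "q a < Inf (range q) + \<epsilon>\<^sup>2"
    using cInf_lessD[of "range q" "Inf (range q) + \<epsilon>\<^sup>2"] \<open>\<epsilon> > 0\<close> by auto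
  have "dist (g s) (g a) < \<epsilon>" if "s \<in> U a" for s
  proof -
    have "(norm (g s - g a))\<^sup>2 < \<epsilon>\<^sup>2"
      using assms(2)[OF that] a cInf_lower[OF rangeI assms(1), of s] by linarith
    then show ?thesis
      using \<open>\<epsilon> > 0\<close> by (simp add: dist_norm power_less_imp_less_base)
  qed
  then show ?thesis by blast
qed

lemma Cauchy_of_dist_less_add:
  fixes X :: "nat \<Rightarrow> 'a::metric_space"
  assumes "r \<longlonglongrightarrow> 0" "\<And>m n. dist (X m) (X n) < r m + r n"
  shows "Cauchy X"
proof (rule metric_CauchyI)
  fix \<epsilon> :: real assume "\<epsilon> > 0"
  then obtain N where N: "\<And>n. n \<ge> N \<Longrightarrow> r n < \<epsilon> / 2"
    using order_tendstoD(2)[OF assms(1), of "\<epsilon> / 2"] by (auto simp: eventually_sequentially)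
  have "dist (X m) (X n) < \<epsilon>" if "m \<ge> N" "n \<ge> N" for m n
    using assms(2)[of m n] N[OF that(1)] N[OF that(2)] by linarith
  then show "\<exists>N. \<forall>m\<ge>N. \<forall>n\<ge>N. dist (X m) (X n) < \<epsilon>"
    by blast
qed

lemma convergent_along_meeting_sets:
  fixes f :: "'a \<Rightarrow> 'b::complete_space"
  assumes meet: "\<And>a b. U a \<inter> U b \<noteq> {}"
    and small: "\<And>\<epsilon>. \<epsilon> > 0 \<Longrightarrow> \<exists>a. \<forall>s\<in>U a. dist (f s) (f a) < \<epsilon>"
  obtains z where "z \<in> closure (range f)" "\<And>\<epsilon>. \<epsilon> > 0 \<Longrightarrow> \<exists>a. \<forall>s\<in>U a. dist (f s) z < \<epsilon>"
proof -
  define r where "r n = inverse (real (Suc n))" for n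
  have r_pos: "r n > 0" for n by (simp add: r_def)
  obtain a where a: "\<And>n s. s \<in> U (a n) \<Longrightarrow> dist (f s) (f (a n)) < r n"
    using small[OF r_pos] by metis
  have a_close: "dist (f (a m)) (f (a n)) < r m + r n" for m n
  proof -
    obtain c where "c \<in> U (a m)" "c \<in> U (a n)" using meet by blast
    then have "dist (f c) (f (a m)) < r m" "dist (f c) (f (a n)) < r n" by (simp_all add: a)
    then show ?thesis using dist_triangle3[of "f (a m)" "f (a n)" "f c"] by linarith
  qed
  have r_lim: "r \<longlonglongrightarrow> 0"
    unfolding r_def by (rule LIMSEQ_inverse_real_of_nat)
  have "Cauchy (\<lambda>n. f (a n))"
    using r_lim a_close by (rule Cauchy_of_dist_less_add)
  then obtain z where z: "(\<lambda>n. f (a n)) \<longlonglongrightarrow> z"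
    using convergent_def complete_UNIV by (blast dest: Cauchy_convergent)
  show thesis
  proof
    show "z \<in> closure (range f)"
      unfolding closure_sequential using z by (intro exI[of _ "\<lambda>n. f (a n)"]) simp
    fix \<epsilon> :: real assume "\<epsilon> > 0"
    then obtain n where "r n < \<epsilon> / 2"
      using reals_Archimedean[of "\<epsilon> / 2"] by (auto simp: r_def)
    then have n: "2 * r n < \<epsilon>" by simp
    have "dist (f s) z \<le> 2 * r n" if "s \<in> U (a n)" for s
    proof (rule tendsto_le[OF trivial_limit_sequentially])
      show "(\<lambda>m. dist (f s) (f (a m))) \<longlonglongrightarrow> dist (f s) z"
        by (intro tendsto_intros z)
      show "(\<lambda>m. 2 * r n + r m) \<longlonglongrightarrow> 2 * r n"
        using tendsto_add[OF tendsto_const r_lim] by simp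
      have "dist (f s) (f (a m)) \<le> 2 * r n + r m" for m
        using a[OF that] a_close[of n m] dist_triangle[of "f s" "f (a m)" "f (a n)"] by linarith
      then show "\<forall>\<^sub>F m in sequentially. dist (f s) (f (a m)) \<le> 2 * r n + r m"
        by simp
    qed
    then show "\<exists>a. \<forall>s\<in>U a. dist (f s) z < \<epsilon>"
      using n by force
  qed
qed

lemma le_on_closure_orbit:
  fixes f :: "'s::{semigroup_mult,topological_space} \<Rightarrow> real"
  assumes "continuous_on UNIV f" "\<And>t. f (t * a) \<le> f a"
    and "s \<in> closure (range (\<lambda>t. t * a)) \<union> {a}"
  shows "f s \<le> f a"
  using assms continuous_le_on_closure[OF continuous_on_subset[OF assms(1)], of "range (\<lambda>t. t * a)" s "f a"]
  by auto

lemma metric_proj_orbit_closure_descent: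
  fixes D :: "'a::{real_inner,complete_space} set"
    and y :: "'s::{semigroup_mult,topological_space} \<Rightarrow> 'a"
  assumes "closed D" "convex D" "D \<noteq> {}" "continuous_on UNIV y"
    and "\<And>z t. z \<in> D \<Longrightarrow> norm (y (t * a) - z) \<le> norm (y a - z)"
    and "s \<in> closure (range (\<lambda>t. t * a)) \<union> {a}"
  shows "(norm (metric_proj D (y s) - metric_proj D (y a)))\<^sup>2 + (norm (y s - metric_proj D (y s)))\<^sup>2
    \<le> (norm (y a - metric_proj D (y a)))\<^sup>2"
proof -
  let ?pa = "metric_proj D (y a)"
  have pa: "?pa \<in> D"
    by (rule metric_proj_in[OF assms(1-3)])
  have "continuous_on UNIV (\<lambda>s. norm (y s - ?pa))"
    using assms(4) by (intro continuous_intros)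
  then have "norm (y s - ?pa) \<le> norm (y a - ?pa)"
    using assms(5)[OF pa] assms(6) by (rule le_on_closure_orbit[where f = "\<lambda>s. norm (y s - ?pa)"])
  then have "(norm (y s - ?pa))\<^sup>2 \<le> (norm (y a - ?pa))\<^sup>2"
    by (simp add: power_mono)
  then show ?thesis
    using metric_proj_pythagoras_le[OF assms(1-3) pa, of "y s"] by linarith
qed

theorem lemma4p10:
  fixes C D :: "'h::{real_inner,complete_space} set"
    and T :: "'s::{semigroup_mult,t2_space} \<Rightarrow> 'h \<Rightarrow> 'h"
    and x :: 'h
  assumes "C \<noteq> {}" and "D \<noteq> {}" and "closed D" and "convex D"
    and "semitop_semigroup TYPE('s)" and "right_reversible TYPE('s)"
    and "representation_on T C"
    and "x \<in> C"
    and "continuous_on UNIV (\<lambda>s. T s x)"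
    and "\<And>z s t. z \<in> D \<Longrightarrow> norm (T (t * s) x - z) \<le> norm (T s x - z)"
  shows "\<exists>z0\<in>D. \<forall>e>0. \<exists>s0. \<forall>s. sg_le s0 s \<longrightarrow> norm (metric_proj D (T s x) - z0) < e"
proof -
  define p where "p s = metric_proj D (T s x)" for s
  define q where "q s = (norm (T s x - p s))\<^sup>2" for s
  define U where "U a = closure (range (\<lambda>t. t * a)) \<union> {a}" for a :: 's
  have descent: "(norm (p s - p a))\<^sup>2 + q s \<le> q a" if "s \<in> U a" for s a
    using metric_proj_orbit_closure_descent[OF assms(3,4,2,9) assms(10) that[unfolded U_def]]
    unfolding p_def q_def by linarith
  have "bdd_below (range q)"
    by (rule bdd_belowI[of _ 0]) (auto simp: q_def)
  then have small: "\<exists>a. \<forall>s\<in>U a. dist (p s) (p a) < e" if "e > 0" for e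
    using small_oscillation_of_potential descent that by blast
  have meet: "U a \<inter> U b \<noteq> {}" for a b
    using assms(6) unfolding right_reversible_def U_def by blast
  obtain z where "z \<in> closure (range p)"
    and z: "\<And>e. e > 0 \<Longrightarrow> \<exists>a. \<forall>s\<in>U a. dist (p s) z < e"
    by (rule convergent_along_meeting_sets[of U p, OF meet small]) blast+
  moreover have "closure (range p) \<subseteq> D"
    using metric_proj_in[OF assms(3,4,2)] by (intro closure_minimal[OF _ assms(3)]) (auto simp: p_def)
  moreover have "s \<in> U a" if "sg_le a s" for a s
    using that unfolding sg_le_def U_def by blast
  ultimately show ?thesis
    unfolding p_def dist_norm by blast
qed

end
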